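(* Let $Y=\mathbf{F}_e$ and let $A\equiv C_0+bf$ be a very ample divisor on $Y$. Let $P_1,\dots,P_r$ be $r$ distinct points of $Y$, no two on the same fibre, and let $F=\{f_1,\dots,f_r\}$ where $f_i=\rho^*(\rho(P_i))$ is the fibre through $P_i$. If $h^0(Y,A)\ge2r$, then for any fixed finite set $\Phi$ of fibres with $\Phi\cap F=\emptyset$ there exists at least one element $\gamma\in|A|$ which passes through $P_1,\dots,P_r$, is smooth at each $P_i$, and intersects every fibre of $\Phi$ transversely.
   Context: $\mathbf{F}_e=\mathbb{P}(\mathcal{O}_{\mathbb{P}^1}\oplus\mathcal{O}_{\mathbb{P}^1}(-e))$, $e\ge0$, with ruling $\rho:\mathbf{F}_e\to\mathbb{P}^1$; $C_0$ ($C_0^2=-e$) and $f$ (fibre class) are the standard generators of $\mathrm{Pic}(\mathbf{F}_e)$. *)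

theory Defs
  imports Complex_Main
begin

(* Concrete model of the Hirzebruch surface F_e over the complex numbers, via Cox
   (homogeneous) coordinates (t0,t1,x0,x1), (t0,t1) <> 0, (x0,x1) <> 0, modulo
   (t0,t1,x0,x1) ~ (l*t0, l*t1, m*l^e*x0, m*x1), l,m <> 0.
   Classes: t0,t1 ~ f ; x0 ~ C_0 + e f ; x1 ~ C_0 (the curve x1 = 0 is C_0, C_0^2 = -e).
   The ruling rho sends the class of (t0,t1,x0,x1) to [t0:t1] in P^1. *)

type_synonym pt = "complex \<times> complex \<times> complex \<times> complex"

definition valid_pt :: "pt \<Rightarrow> bool" where
  "valid_pt p = (case p of (t0,t1,x0,x1) \<Rightarrow> (t0,t1) \<noteq> (0,0) \<and> (x0,x1) \<noteq> (0,0))"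

definition same_fibre :: "pt \<Rightarrow> pt \<Rightarrow> bool" where
  "same_fibre p q = (case p of (t0,t1,_,_) \<Rightarrow> case q of (s0,s1,_,_) \<Rightarrow> t0 * s1 = t1 * s0)"

(* the point [tau0:tau1] of P^1 (tau <> 0) is rho(p) *)
definition on_fibre :: "complex \<times> complex \<Rightarrow> pt \<Rightarrow> bool" where
  "on_fibre tau p = (case tau of (a0,a1) \<Rightarrow> case p of (t0,t1,_,_) \<Rightarrow> a1 * t0 - a0 * t1 = 0)"

definition bform :: "(nat \<Rightarrow> complex) \<Rightarrow> nat \<Rightarrow> complex \<Rightarrow> complex \<Rightarrow> complex" where
  "bform c d t0 t1 = (\<Sum>i\<le>d. c i * t0 ^ i * t1 ^ (d - i))"

definition bform_d0 :: "(nat \<Rightarrow> complex) \<Rightarrow> nat \<Rightarrow> complex \<Rightarrow> complex \<Rightarrow> complex" where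
  "bform_d0 c d t0 t1 = (\<Sum>i\<le>d. c i * of_nat i * t0 ^ (i - 1) * t1 ^ (d - i))"

definition bform_d1 :: "(nat \<Rightarrow> complex) \<Rightarrow> nat \<Rightarrow> complex \<Rightarrow> complex \<Rightarrow> complex" where
  "bform_d1 c d t0 t1 = (\<Sum>i\<le>d. c i * of_nat (d - i) * t0 ^ i * t1 ^ (d - i - 1))"

(* A global section of O(C_0 + b f) (b >= e) is  s = x0 * G(t) + x1 * H(t)  with
   G a binary form of degree b - e and H a binary form of degree b. *)
type_synonym sect = "(nat \<Rightarrow> complex) \<times> (nat \<Rightarrow> complex)"

definition sec_eval :: "nat \<Rightarrow> nat \<Rightarrow> sect \<Rightarrow> pt \<Rightarrow> complex" where
  "sec_eval e b \<sigma> p = (case p of (t0,t1,x0,x1) \<Rightarrow>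
      x0 * bform (fst \<sigma>) (b - e) t0 t1 + x1 * bform (snd \<sigma>) b t0 t1)"

definition sec_grad :: "nat \<Rightarrow> nat \<Rightarrow> sect \<Rightarrow> pt \<Rightarrow> pt" where
  "sec_grad e b \<sigma> p = (case p of (t0,t1,x0,x1) \<Rightarrow>
      (x0 * bform_d0 (fst \<sigma>) (b - e) t0 t1 + x1 * bform_d0 (snd \<sigma>) b t0 t1,
       x0 * bform_d1 (fst \<sigma>) (b - e) t0 t1 + x1 * bform_d1 (snd \<sigma>) b t0 t1,
       bform (fst \<sigma>) (b - e) t0 t1,
       bform (snd \<sigma>) b t0 t1))"

(* sigma is a nonzero section, so its zero divisor gamma is an element of |C_0 + b f| *)
definition nonzero_section :: "nat \<Rightarrow> nat \<Rightarrow> sect \<Rightarrow> bool" where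
  "nonzero_section e b \<sigma> = ((\<exists>i\<le>b - e. fst \<sigma> i \<noteq> 0) \<or> (\<exists>i\<le>b. snd \<sigma> i \<noteq> 0))"

definition passes_through :: "nat \<Rightarrow> nat \<Rightarrow> sect \<Rightarrow> pt \<Rightarrow> bool" where
  "passes_through e b \<sigma> p = (sec_eval e b \<sigma> p = 0)"

(* Jacobian criterion: the curve {s = 0} is smooth at p (the quotient map from the
   Cox open set to F_e is a smooth principal torus bundle) *)
definition smooth_at :: "nat \<Rightarrow> nat \<Rightarrow> sect \<Rightarrow> pt \<Rightarrow> bool" where
  "smooth_at e b \<sigma> p = (sec_grad e b \<sigma> p \<noteq> (0,0,0,0))"

(* gamma = {s = 0} meets the fibre {tau1*t0 - tau0*t1 = 0} transversely: at every
   common point the differentials of the two equations are linearly independent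
   (the gradient of the fibre equation is (tau1, -tau0, 0, 0) <> 0). *)
definition transverse_to_fibre :: "nat \<Rightarrow> nat \<Rightarrow> sect \<Rightarrow> complex \<times> complex \<Rightarrow> bool" where
  "transverse_to_fibre e b \<sigma> tau = (\<forall>p. valid_pt p \<and> sec_eval e b \<sigma> p = 0 \<and> on_fibre tau p \<longrightarrow>
      \<not> (\<exists>c. sec_grad e b \<sigma> p = (c * snd tau, - c * fst tau, 0, 0)))"

(* Very ampleness of a C_0 + b f on F_e (Hartshorne V.2.18): a > 0 and b > a e *)
definition very_ample_Fe :: "nat \<Rightarrow> nat \<Rightarrow> nat \<Rightarrow> bool" where
  "very_ample_Fe e a b = (a > 0 \<and> b > a * e)"

(* h^0(F_e, C_0 + b f) for b >= e: number of monomials x0 t^(b-e) and x1 t^b *)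
definition h0_C0_bf :: "nat \<Rightarrow> nat \<Rightarrow> nat" where
  "h0_C0_bf e b = (b - e + 1) + (b + 1)"

end

theory Submission
  imports Defs
begin

text \<open>A section of \<open>C\<^sub>0 + b f\<close> is \<open>x\<^sub>0 G + x\<^sub>1 H\<close> with binary forms \<open>G\<close>, \<open>H\<close> of degrees
  \<open>b - e\<close> and \<open>b\<close>, and points on distinct fibres have pairwise non-proportional base points in
  \<open>\<P>\<^sup>1\<close>. If at most \<open>b - e\<close> of the points lie on \<open>C\<^sub>0 = {x\<^sub>1 = 0}\<close>, let \<open>G\<close> vanish
  exactly at their base points and choose \<open>H\<close> by interpolation so that the section vanishes at
  the other points while \<open>H\<close> stays nonzero on \<open>C\<^sub>0\<close>; then \<open>\<partial>/\<partial>x\<^sub>0 = G\<close> or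
  \<open>\<partial>/\<partial>x\<^sub>1 = H\<close> is nonzero at each point. Otherwise take \<open>G = 0\<close> and \<open>H\<close> the product of the
  linear forms of the points off \<open>C\<^sub>0\<close>, whose roots are simple. Transversality to a fibre of
  \<open>\<Phi>\<close> only needs \<open>G\<close> or \<open>H\<close> to be nonzero at its base point, which the construction
  ensures by padding with powers of a linear form avoiding all these points.\<close>

section \<open>Binary forms\<close>

definition binary_form :: "nat \<Rightarrow> (complex \<times> complex \<Rightarrow> complex) \<Rightarrow> bool" where
  "binary_form d f \<longleftrightarrow> (\<exists>c. \<forall>z. f z = bform c d (fst z) (snd z))"

definition det2 :: "complex \<times> complex \<Rightarrow> complex \<times> complex \<Rightarrow> complex" where
  "det2 x z = fst x * snd z - snd x * fst z"

lemma det2_self [simp]: "det2 x x = 0"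
  by (simp add: det2_def mult.commute)

lemma det2_swap: "det2 z x = - det2 x z"
  by (simp add: det2_def algebra_simps)

lemma det2_eq_0_commute: "det2 z x = 0 \<longleftrightarrow> det2 x z = 0"
  by (metis det2_swap neg_equal_0_iff_equal)

lemma binary_form_const: "binary_form 0 (\<lambda>_. a)"
  unfolding binary_form_def by (rule exI[of _ "\<lambda>_. a"]) (simp add: bform_def)

lemma binary_form_add:
  assumes "binary_form d f" "binary_form d g"
  shows "binary_form d (\<lambda>z. f z + g z)"
proof -
  obtain c c' where "\<forall>z. f z = bform c d (fst z) (snd z)" "\<forall>z. g z = bform c' d (fst z) (snd z)"
    using assms by (auto simp: binary_form_def)
  then show ?thesis
    unfolding binary_form_def
    by (intro exI[of _ "\<lambda>i. c i + c' i"]) (simp add: bform_def sum.distrib algebra_simps)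
qed

lemma binary_form_scale:
  assumes "binary_form d f"
  shows "binary_form d (\<lambda>z. a * f z)"
proof -
  obtain c where "\<forall>z. f z = bform c d (fst z) (snd z)"
    using assms by (auto simp: binary_form_def)
  then show ?thesis
    unfolding binary_form_def
    by (intro exI[of _ "\<lambda>i. a * c i"]) (simp add: bform_def sum_distrib_left algebra_simps)
qed

lemma binary_form_sum:
  "finite A \<Longrightarrow> (\<And>j. j \<in> A \<Longrightarrow> binary_form d (f j)) \<Longrightarrow> binary_form d (\<lambda>z. \<Sum>j\<in>A. f j z)"
proof (induction A rule: finite_induct)
  case empty
  show ?case
    unfolding binary_form_def by (intro exI[of _ "\<lambda>_. 0"]) (simp add: bform_def)
next
  case (insert x F)
  then show ?case using binary_form_add[of d "f x" "\<lambda>z. \<Sum>j\<in>F. f j z"] by simp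
qed

lemma binary_form_det2_mult:
  assumes "binary_form d f"
  shows "binary_form (Suc d) (\<lambda>z. det2 x z * f z)"
proof -
  obtain c where f: "\<forall>z. f z = bform c d (fst z) (snd z)"
    using assms by (auto simp: binary_form_def)
  define \<alpha> \<beta> where "\<alpha> = - snd x" and "\<beta> = fst x"
  define c' where "c' k = (if k = 0 then 0 else \<alpha> * c (k - 1)) + (if k \<le> d then \<beta> * c k else 0)" for k
  have "(\<alpha> * s0 + \<beta> * s1) * bform c d s0 s1 = bform c' (Suc d) s0 s1" for s0 s1
  proof -
    have raise0: "(\<Sum>k\<le>Suc d. (if k = 0 then 0 else \<alpha> * c (k - 1)) * s0 ^ k * s1 ^ (Suc d - k))
        = \<alpha> * s0 * bform c d s0 s1"
      unfolding sum.atMost_Suc_shift bform_def sum_distrib_left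
      by (auto intro!: sum.cong simp: algebra_simps)
    have raise1: "(\<Sum>k\<le>Suc d. (if k \<le> d then \<beta> * c k else 0) * s0 ^ k * s1 ^ (Suc d - k))
        = \<beta> * s1 * bform c d s0 s1"
      unfolding sum.atMost_Suc bform_def sum_distrib_left
      by (auto intro!: sum.cong simp: algebra_simps Suc_diff_le)
    have "bform c' (Suc d) s0 s1
        = (\<Sum>k\<le>Suc d. (if k = 0 then 0 else \<alpha> * c (k - 1)) * s0 ^ k * s1 ^ (Suc d - k))
        + (\<Sum>k\<le>Suc d. (if k \<le> d then \<beta> * c k else 0) * s0 ^ k * s1 ^ (Suc d - k))"
      unfolding bform_def c'_def sum.distrib[symmetric] by (rule sum.cong) (auto simp: algebra_simps)
    then show ?thesis using raise0 raise1 by (simp add: algebra_simps)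
  qed
  moreover have "det2 x z = \<alpha> * fst z + \<beta> * snd z" for z
    by (simp add: det2_def \<alpha>_def \<beta>_def algebra_simps)
  ultimately show ?thesis
    unfolding binary_form_def using f by (intro exI[of _ c']) simp
qed

lemma binary_form_prod_det2_mult:
  "finite A \<Longrightarrow> binary_form d f \<Longrightarrow>
    binary_form (card A + d) (\<lambda>z. (\<Prod>i\<in>A. det2 (q i) z) * f z)"
proof (induction A rule: finite_induct)
  case (insert x F)
  then show ?case
    using binary_form_det2_mult[OF insert.IH[OF insert.prems], of "q x"] by (simp add: mult.assoc)
qed simp

lemma binary_form_det2_power: "binary_form n (\<lambda>z. det2 w z ^ n)"
  by (induction n) (use binary_form_const[of 1] binary_form_det2_mult in auto)

lemma bform_homogeneous: "bform c d (l * s0) (l * s1) = l ^ d * bform c d s0 s1"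
  unfolding bform_def sum_distrib_left
proof (rule sum.cong)
  fix i assume "i \<in> {..d}"
  then have "l ^ i * l ^ (d - i) = l ^ d" by (simp add: power_add[symmetric])
  then show "c i * (l * s0) ^ i * (l * s1) ^ (d - i) = l ^ d * (c i * s0 ^ i * s1 ^ (d - i))"
    by (simp add: power_mult_distrib algebra_simps)
qed simp

lemma bform_nonzero_imp_coeff_nonzero: "bform c d s0 s1 \<noteq> 0 \<Longrightarrow> \<exists>i\<le>d. c i \<noteq> 0"
  unfolding bform_def by (rule ccontr) auto

lemma bform_has_derivative_0: "((\<lambda>s. bform c d s t) has_field_derivative bform_d0 c d s t) (at s)"
  unfolding bform_def bform_d0_def
  by (rule DERIV_sum) (auto intro!: derivative_eq_intros)

lemma bform_has_derivative_1: "((\<lambda>t. bform c d s t) has_field_derivative bform_d1 c d s t) (at t)"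
  unfolding bform_def bform_d1_def
proof (rule DERIV_sum)
  fix i
  have "((\<lambda>t. c i * s ^ i * t ^ (d - i)) has_field_derivative
      c i * s ^ i * (of_nat (d - i) * t ^ (d - i - 1))) (at t)"
    using DERIV_cmult[OF DERIV_power[OF DERIV_ident, of "d - i" t UNIV], of "c i * s ^ i"] by simp
  then show "((\<lambda>t. c i * s ^ i * t ^ (d - i)) has_field_derivative
      c i * of_nat (d - i) * s ^ i * t ^ (d - i - 1)) (at t)"
    by (simp add: algebra_simps)
qed

lemma bform_gradient_at_factor:
  assumes split: "\<And>z. bform c d (fst z) (snd z) = det2 x z * R z" and R: "binary_form n R"
  shows "bform_d0 c d (fst x) (snd x) = - snd x * R x"
    and "bform_d1 c d (fst x) (snd x) = fst x * R x"
proof -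
  obtain c' where c': "\<And>z. R z = bform c' n (fst z) (snd z)"
    using R by (auto simp: binary_form_def)
  obtain x0 x1 where x: "x = (x0, x1)" by (cases x)
  have "((\<lambda>s. (x0 * x1 - x1 * s) * bform c' n s x1) has_field_derivative
      (x0 * x1 - x1 * x0) * bform_d0 c' n x0 x1 + (- x1) * bform c' n x0 x1) (at x0)"
    by (rule DERIV_mult'[OF _ bform_has_derivative_0]) (auto intro!: derivative_eq_intros)
  moreover have "(\<lambda>s. bform c d s x1) = (\<lambda>s. (x0 * x1 - x1 * s) * bform c' n s x1)"
    using split[of "(_, x1)"] c' by (auto simp: x det2_def)
  ultimately show "bform_d0 c d (fst x) (snd x) = - snd x * R x"
    using DERIV_unique[OF bform_has_derivative_0] c' by (fastforce simp: x)
  have "((\<lambda>t. (x0 * t - x1 * x0) * bform c' n x0 t) has_field_derivative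
      (x0 * x1 - x1 * x0) * bform_d1 c' n x0 x1 + x0 * bform c' n x0 x1) (at x1)"
    by (rule DERIV_mult'[OF _ bform_has_derivative_1]) (auto intro!: derivative_eq_intros)
  moreover have "(\<lambda>t. bform c d x0 t) = (\<lambda>t. (x0 * t - x1 * x0) * bform c' n x0 t)"
    using split[of "(x0, _)"] c' by (auto simp: x det2_def)
  ultimately show "bform_d1 c d (fst x) (snd x) = fst x * R x"
    using DERIV_unique[OF bform_has_derivative_1] c' by (fastforce simp: x mult.commute)
qed

lemma exists_det2_nonzero:
  assumes "finite V" "(0, 0) \<notin> V"
  obtains w where "w \<noteq> (0, 0)" "\<And>v. v \<in> V \<Longrightarrow> det2 w v \<noteq> 0"
proof -
  obtain l :: complex where l: "l \<notin> (\<lambda>v. snd v / fst v) ` V"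
    using ex_new_if_finite[OF infinite_UNIV_char_0] assms(1) by blast
  have "det2 (1, l) v \<noteq> 0" if "v \<in> V" for v
  proof (cases "fst v = 0")
    case True
    then show ?thesis using assms(2) that by (cases v) (auto simp: det2_def)
  next
    case False
    then show ?thesis using l that by (force simp: det2_def field_simps)
  qed
  then show ?thesis using that[of "(1, l)"] by simp
qed

lemma det2_eq_0_imp_proportional:
  assumes "det2 x z = 0" "x \<noteq> (0, 0)" "z \<noteq> (0, 0)"
  shows "\<exists>l. l \<noteq> 0 \<and> z = (l * fst x, l * snd x)"
proof (cases "fst x = 0")
  case True
  then have "snd x \<noteq> 0" "fst z = 0" using assms by (auto simp: det2_def prod_eq_iff)
  then show ?thesis using assms(3) by (intro exI[of _ "snd z / snd x"]) (auto simp: True prod_eq_iff)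
next
  case False
  then have "snd z = fst z / fst x * snd x" "fst z \<noteq> 0"
    using assms by (auto simp: det2_def field_simps prod_eq_iff)
  then show ?thesis using False by (intro exI[of _ "fst z / fst x"]) (auto simp: prod_eq_iff)
qed

definition root_form ::
  "('i \<Rightarrow> complex \<times> complex) \<Rightarrow> 'i set \<Rightarrow> nat \<Rightarrow> complex \<times> complex \<Rightarrow> complex \<times> complex \<Rightarrow> complex"
  where "root_form q A n w z = (\<Prod>i\<in>A. det2 (q i) z) * det2 w z ^ n"

lemma binary_form_root_form: "finite A \<Longrightarrow> binary_form (card A + n) (root_form q A n w)"
  unfolding root_form_def by (rule binary_form_prod_det2_mult[OF _ binary_form_det2_power])

lemma root_form_eq_0: "finite A \<Longrightarrow> i \<in> A \<Longrightarrow> root_form q A n w (q i) = 0"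
  unfolding root_form_def by (auto simp: prod_zero_iff intro!: bexI[of _ i])

lemma root_form_nonzero:
  "finite A \<Longrightarrow> (\<And>i. i \<in> A \<Longrightarrow> det2 (q i) z \<noteq> 0) \<Longrightarrow> det2 w z \<noteq> 0 \<Longrightarrow> root_form q A n w z \<noteq> 0"
  unfolding root_form_def by simp

lemma root_form_remove:
  "finite A \<Longrightarrow> i \<in> A \<Longrightarrow> root_form q A n w z = det2 (q i) z * root_form q (A - {i}) n w z"
  unfolding root_form_def by (simp add: prod.remove mult.assoc)

text \<open>Lagrange interpolation; the cofactors are padded to degree \<open>d\<close> by a power of \<open>det2 w\<close>.\<close>

lemma binary_form_interpolation:
  assumes A: "finite A" "card A \<le> Suc d"
    and indep: "\<And>i j. i \<in> A \<Longrightarrow> j \<in> A \<Longrightarrow> i \<noteq> j \<Longrightarrow> det2 (q i) (q j) \<noteq> 0"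
    and w: "\<And>i. i \<in> A \<Longrightarrow> det2 w (q i) \<noteq> 0"
  obtains f where "binary_form d f" "\<And>i. i \<in> A \<Longrightarrow> f (q i) = v i"
proof -
  define L where "L j = root_form q (A - {j}) (Suc d - card A) w" for j
  define f where "f z = (\<Sum>j\<in>A. v j / L j (q j) * L j z)" for z
  have "binary_form d (L j)" if "j \<in> A" for j
  proof -
    have "card (A - {j}) + (Suc d - card A) = d"
      using A that card_Diff_singleton[of j A] card_gt_0_iff[of A] by fastforce
    then show ?thesis using binary_form_root_form[of "A - {j}" "Suc d - card A" q w] A
      by (simp add: L_def)
  qed
  then have "binary_form d f"
    unfolding f_def by (intro binary_form_sum A binary_form_scale)
  moreover have "f (q i) = v i" if i: "i \<in> A" for i
  proof -
    have "L j (q i) = 0" if "j \<in> A - {i}" for j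
      unfolding L_def using that i A by (intro root_form_eq_0) auto
    then have "f (q i) = v i / L i (q i) * L i (q i)"
      unfolding f_def by (simp add: sum.remove[OF A(1) i])
    moreover have "L i (q i) \<noteq> 0"
      unfolding L_def using A i indep w by (intro root_form_nonzero) auto
    ultimately show ?thesis by simp
  qed
  ultimately show ?thesis using that by blast
qed

lemma binary_form_interpolation_avoiding:
  assumes A: "finite A" "card A \<le> d"
    and indep: "\<And>i j. i \<in> A \<Longrightarrow> j \<in> A \<Longrightarrow> i \<noteq> j \<Longrightarrow> det2 (q i) (q j) \<noteq> 0"
    and w: "\<And>i. i \<in> A \<Longrightarrow> det2 w (q i) \<noteq> 0"
    and Z: "finite Z" "\<And>z. z \<in> Z \<Longrightarrow> det2 w z \<noteq> 0"
    and off: "\<And>i z. i \<in> A \<Longrightarrow> z \<in> Z \<Longrightarrow> det2 (q i) z \<noteq> 0"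
  obtains f where "binary_form d f" "\<And>i. i \<in> A \<Longrightarrow> f (q i) = v i" "\<And>z. z \<in> Z \<Longrightarrow> f z \<noteq> 0"
proof -
  obtain f0 where f0: "binary_form d f0" "\<And>i. i \<in> A \<Longrightarrow> f0 (q i) = v i"
    using binary_form_interpolation[of A d q w v] A indep w by auto
  define K where "K = root_form q A (d - card A) w"
  have K: "binary_form d K"
    using binary_form_root_form[OF A(1), of "d - card A" q w] A(2) by (simp add: K_def)
  have K_nonzero: "K z \<noteq> 0" if "z \<in> Z" for z
    unfolding K_def using A off Z that by (intro root_form_nonzero) auto
  obtain a :: complex where a: "a \<notin> (\<lambda>z. - f0 z / K z) ` Z"
    using ex_new_if_finite[OF infinite_UNIV_char_0] Z(1) by blast
  show ?thesis
  proof (rule that[of "\<lambda>z. f0 z + a * K z"])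
    show "binary_form d (\<lambda>z. f0 z + a * K z)"
      by (rule binary_form_add[OF f0(1) binary_form_scale[OF K]])
    show "f0 (q i) + a * K (q i) = v i" if "i \<in> A" for i
      using f0(2) root_form_eq_0[OF A(1) that] that by (simp add: K_def)
    show "f0 z + a * K z \<noteq> 0" if "z \<in> Z" for z
      using a that K_nonzero[OF that] by (force simp: field_simps add_eq_0_iff)
  qed
qed

section \<open>Sections of \<open>C\<^sub>0 + b f\<close>\<close>

definition base :: "pt \<Rightarrow> complex \<times> complex" where
  "base p = (fst p, fst (snd p))"

lemma base_conv [simp]: "base (t0, t1, x0, x1) = (t0, t1)"
  by (simp add: base_def)

lemma same_fibre_iff_det2: "same_fibre p p' \<longleftrightarrow> det2 (base p) (base p') = 0"
  by (cases p; cases p') (auto simp: same_fibre_def det2_def base_def)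

lemma on_fibre_iff_det2: "on_fibre \<tau> p \<longleftrightarrow> det2 (base p) \<tau> = 0"
  by (cases \<tau>; cases p) (auto simp: on_fibre_def det2_def base_def algebra_simps)

lemma nonzero_section_if_nonvanishing:
  "bform g (b - e) s0 s1 \<noteq> 0 \<or> bform h b s0 s1 \<noteq> 0 \<Longrightarrow> nonzero_section e b (g, h)"
  by (auto simp: nonzero_section_def dest: bform_nonzero_imp_coeff_nonzero)

lemma smooth_at_if_nonvanishing:
  "bform g (b - e) t0 t1 \<noteq> 0 \<or> bform h b t0 t1 \<noteq> 0 \<Longrightarrow> smooth_at e b (g, h) (t0, t1, x0, x1)"
  by (auto simp: smooth_at_def sec_grad_def)

lemma smooth_at_simple_root:
  assumes "\<And>z. bform h b (fst z) (snd z) = det2 (t0, t1) z * R z" "binary_form n R"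
    and "R (t0, t1) \<noteq> 0" "(t0, t1) \<noteq> (0, 0)" "x1 \<noteq> 0"
  shows "smooth_at e b (\<lambda>_. 0, h) (t0, t1, x0, x1)"
  using bform_gradient_at_factor[OF assms(1,2)] assms(3-5)
  by (auto simp: smooth_at_def sec_grad_def bform_d0_def bform_d1_def)

text \<open>Both partial derivatives in the \<open>x\<close>-variables are values of the forms at the base point,
  and the forms are homogeneous, so one nonvanishing value at \<open>\<tau>\<close> settles the whole fibre.\<close>

lemma transverse_to_fibre_if_nonvanishing:
  assumes "\<tau> \<noteq> (0, 0)"
    and "bform g (b - e) (fst \<tau>) (snd \<tau>) \<noteq> 0 \<or> bform h b (fst \<tau>) (snd \<tau>) \<noteq> 0"
  shows "transverse_to_fibre e b (g, h) \<tau>"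
  unfolding transverse_to_fibre_def
proof (intro allI impI notI)
  fix p assume p: "valid_pt p \<and> sec_eval e b (g, h) p = 0 \<and> on_fibre \<tau> p"
    and grad: "\<exists>c. sec_grad e b (g, h) p = (c * snd \<tau>, - c * fst \<tau>, 0, 0)"
  obtain t0 t1 x0 x1 where p_eq: "p = (t0, t1, x0, x1)" by (cases p) auto
  have "det2 \<tau> (t0, t1) = 0"
    using p det2_swap[of \<tau> "(t0, t1)"] by (simp add: p_eq on_fibre_iff_det2)
  moreover have "(t0, t1) \<noteq> (0, 0)"
    using p by (simp add: p_eq valid_pt_def)
  ultimately obtain l where l: "l \<noteq> 0" "t0 = l * fst \<tau>" "t1 = l * snd \<tau>"
    using det2_eq_0_imp_proportional[OF _ assms(1)] by blast
  from grad have "bform g (b - e) t0 t1 = 0" "bform h b t0 t1 = 0"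
    by (auto simp: p_eq sec_grad_def)
  then show False
    using assms(2) l by (simp add: bform_homogeneous)
qed

section \<open>Points on distinct fibres\<close>

locale marked_fibres =
  fixes e b r :: nat and P :: "nat \<Rightarrow> pt" and \<Phi> :: "(complex \<times> complex) set"
  assumes r_le: "r \<le> Suc b"
    and valid: "\<And>i. i < r \<Longrightarrow> valid_pt (P i)"
    and distinct_fibres: "\<And>i j. i < r \<Longrightarrow> j < r \<Longrightarrow> i \<noteq> j \<Longrightarrow> det2 (base (P i)) (base (P j)) \<noteq> 0"
    and finite_Phi: "finite \<Phi>"
    and Phi_nonzero: "\<And>\<tau>. \<tau> \<in> \<Phi> \<Longrightarrow> \<tau> \<noteq> (0, 0)"
    and Phi_off: "\<And>\<tau> i. \<tau> \<in> \<Phi> \<Longrightarrow> i < r \<Longrightarrow> det2 (base (P i)) \<tau> \<noteq> 0"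
begin

abbreviation q :: "nat \<Rightarrow> complex \<times> complex" where
  "q i \<equiv> base (P i)"

lemma base_nonzero: "i < r \<Longrightarrow> q i \<noteq> (0, 0)"
  using valid[of i] by (cases "P i") (auto simp: valid_pt_def)

definition on_C0 :: "nat set" where
  "on_C0 = {i. i < r \<and> snd (snd (snd (P i))) = 0}"

definition off_C0 :: "nat set" where
  "off_C0 = {i. i < r \<and> snd (snd (snd (P i))) \<noteq> 0}"

lemma finite_on_C0 [simp]: "finite on_C0" and finite_off_C0 [simp]: "finite off_C0"
  by (simp_all add: on_C0_def off_C0_def)

lemma on_off_C0: "on_C0 \<subseteq> {..<r}" "off_C0 \<subseteq> {..<r}" "on_C0 \<inter> off_C0 = {}"
  by (auto simp: on_C0_def off_C0_def)

lemma card_on_C0_off_C0: "card on_C0 + card off_C0 = r"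
proof -
  have "on_C0 \<union> off_C0 = {..<r}" by (auto simp: on_C0_def off_C0_def)
  then show ?thesis using card_Un_disjoint[of on_C0 off_C0] on_off_C0(3) by simp
qed

lemma det2_on_off_C0:
  assumes "i \<in> on_C0" "j \<in> off_C0"
  shows "det2 (q i) (q j) \<noteq> 0" "det2 (q j) (q i) \<noteq> 0"
  using assms distinct_fibres on_off_C0 by blast+

definition good_section :: "sect \<Rightarrow> bool" where
  "good_section \<sigma> \<longleftrightarrow> nonzero_section e b \<sigma>
     \<and> (\<forall>i<r. passes_through e b \<sigma> (P i) \<and> smooth_at e b \<sigma> (P i))
     \<and> (\<forall>\<tau>\<in>\<Phi>. transverse_to_fibre e b \<sigma> \<tau>)"

text \<open>\<open>det2 w\<close> is the auxiliary linear form used to pad products up to the right degree,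
  and \<open>z\<close> a point where the constructed forms are nonzero.\<close>

definition generic_pair :: "complex \<times> complex \<Rightarrow> complex \<times> complex \<Rightarrow> bool" where
  "generic_pair w z \<longleftrightarrow> (\<forall>i<r. det2 w (q i) \<noteq> 0) \<and> (\<forall>\<tau>\<in>\<Phi>. det2 w \<tau> \<noteq> 0)
     \<and> (\<forall>i<r. det2 (q i) z \<noteq> 0) \<and> det2 w z \<noteq> 0"

lemma exists_generic_pair: "\<exists>w z. generic_pair w z"
proof -
  have "(0, 0) \<notin> q ` {..<r} \<union> \<Phi>"
    using base_nonzero Phi_nonzero by fastforce
  then obtain w where w: "w \<noteq> (0, 0)" "\<And>v. v \<in> q ` {..<r} \<union> \<Phi> \<Longrightarrow> det2 w v \<noteq> 0"
    using exists_det2_nonzero[of "q ` {..<r} \<union> \<Phi>"] finite_Phi by blast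
  have "(0, 0) \<notin> insert w (q ` {..<r})"
    using base_nonzero w(1) by fastforce
  then obtain z where z: "\<And>v. v \<in> insert w (q ` {..<r}) \<Longrightarrow> det2 z v \<noteq> 0"
    using exists_det2_nonzero[of "insert w (q ` {..<r})"] by blast
  have "generic_pair w z"
    unfolding generic_pair_def using w(2) z det2_eq_0_commute[of z] by blast
  then show ?thesis by blast
qed

lemma exists_form_vanishing_on_C0:
  assumes "generic_pair w z" "card on_C0 \<le> d"
  obtains G where "binary_form d G" "\<And>i. i \<in> on_C0 \<Longrightarrow> G (q i) = 0"
    "\<And>v. v \<in> q ` off_C0 \<union> \<Phi> \<union> {z} \<Longrightarrow> G v \<noteq> 0"
proof -
  define Z where "Z = q ` off_C0 \<union> \<Phi> \<union> {z}"
  have "finite Z" using finite_Phi by (simp add: Z_def)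
  have indep: "det2 (q i) (q j) \<noteq> 0" if "i \<in> on_C0" "j \<in> on_C0" "i \<noteq> j" for i j
    using distinct_fibres on_off_C0(1) that by blast
  have w_on: "det2 w (q i) \<noteq> 0" if "i \<in> on_C0" for i
    using assms(1) on_off_C0(1) that unfolding generic_pair_def by blast
  have w_Z: "det2 w v \<noteq> 0" if "v \<in> Z" for v
    using assms(1) that on_off_C0(2) unfolding Z_def generic_pair_def by blast
  have on_Z: "det2 (q i) v \<noteq> 0" if "i \<in> on_C0" "v \<in> Z" for i v
    using assms(1) that det2_on_off_C0 Phi_off on_off_C0(1)
    unfolding Z_def generic_pair_def by blast
  show thesis
  proof (rule binary_form_interpolation_avoiding[of on_C0 d q w Z "\<lambda>_. 0",
        OF finite_on_C0 assms(2) indep w_on \<open>finite Z\<close> w_Z on_Z])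
    fix G assume "binary_form d G" "\<And>i. i \<in> on_C0 \<Longrightarrow> G (q i) = 0" "\<And>v. v \<in> Z \<Longrightarrow> G v \<noteq> 0"
    then show thesis using that unfolding Z_def by blast
  qed
qed

text \<open>At most \<open>b\<close> points lie off \<open>C\<^sub>0\<close> whenever some point lies on it, because \<open>r \<le> b + 1\<close>.\<close>

lemma exists_form_interpolating_off_C0:
  assumes w: "\<And>i. i < r \<Longrightarrow> det2 w (q i) \<noteq> 0"
  obtains H where "binary_form b H" "\<And>i. i \<in> off_C0 \<Longrightarrow> H (q i) = v i"
    "\<And>i. i \<in> on_C0 \<Longrightarrow> H (q i) \<noteq> 0"
proof -
  have indep: "det2 (q i) (q j) \<noteq> 0" if "i \<in> off_C0" "j \<in> off_C0" "i \<noteq> j" for i j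
    using distinct_fibres on_off_C0(2) that by blast
  have w_off: "det2 w (q i) \<noteq> 0" if "i \<in> off_C0" for i
    using on_off_C0(2) w that by blast
  show thesis
  proof (cases "on_C0 = {}")
    case True
    then have "card off_C0 \<le> Suc b" using card_on_C0_off_C0 r_le by simp
    then show thesis
    proof (rule binary_form_interpolation[of off_C0 b q w v, OF finite_off_C0 _ indep w_off])
      fix H assume "binary_form b H" "\<And>i. i \<in> off_C0 \<Longrightarrow> H (q i) = v i"
      then show thesis using that True by blast
    qed
  next
    case False
    then have card_off: "card off_C0 \<le> b"
      using card_on_C0_off_C0 r_le card_gt_0_iff[of on_C0] by simp
    have w_on: "det2 w u \<noteq> 0" if "u \<in> q ` on_C0" for u
      using that on_off_C0(1) w by blast
    have off_on: "det2 (q i) u \<noteq> 0" if "i \<in> off_C0" "u \<in> q ` on_C0" for i u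
      using that det2_on_off_C0(2) by blast
    show thesis
    proof (rule binary_form_interpolation_avoiding[of off_C0 b q w "q ` on_C0" v,
          OF finite_off_C0 card_off indep w_off finite_imageI[OF finite_on_C0] w_on off_on])
      fix H assume "binary_form b H" "\<And>i. i \<in> off_C0 \<Longrightarrow> H (q i) = v i"
        "\<And>u. u \<in> q ` on_C0 \<Longrightarrow> H u \<noteq> 0"
      then show thesis using that by blast
    qed
  qed
qed

lemma good_section_if_few_on_C0:
  assumes "card on_C0 \<le> b - e"
  shows "\<exists>\<sigma>. good_section \<sigma>"
proof -
  obtain w z where wz: "generic_pair w z" using exists_generic_pair by blast
  then obtain G where G: "binary_form (b - e) G" "\<And>i. i \<in> on_C0 \<Longrightarrow> G (q i) = 0"
    "\<And>v. v \<in> q ` off_C0 \<union> \<Phi> \<union> {z} \<Longrightarrow> G v \<noteq> 0"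
    using exists_form_vanishing_on_C0 assms by blast
  define v where "v i = (case P i of (_, _, x0, x1) \<Rightarrow> - x0 * G (q i) / x1)" for i
  obtain H where H: "binary_form b H" "\<And>i. i \<in> off_C0 \<Longrightarrow> H (q i) = v i"
    "\<And>i. i \<in> on_C0 \<Longrightarrow> H (q i) \<noteq> 0"
    using exists_form_interpolating_off_C0 wz unfolding generic_pair_def by blast
  obtain g h where g: "\<And>z. G z = bform g (b - e) (fst z) (snd z)"
    and h: "\<And>z. H z = bform h b (fst z) (snd z)"
    using G(1) H(1) by (auto simp: binary_form_def)
  have "passes_through e b (g, h) (P i) \<and> smooth_at e b (g, h) (P i)" if "i < r" for i
  proof -
    obtain t0 t1 x0 x1 where P_i: "P i = (t0, t1, x0, x1)" by (cases "P i") auto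
    show ?thesis
    proof (cases "x1 = 0")
      case True
      then have on: "i \<in> on_C0" using that by (simp add: on_C0_def P_i)
      have "bform g (b - e) t0 t1 = 0" "bform h b t0 t1 \<noteq> 0"
        using G(2)[OF on] H(3)[OF on] by (simp_all add: g h P_i)
      then show ?thesis
        using True by (simp add: P_i passes_through_def sec_eval_def smooth_at_if_nonvanishing)
    next
      case False
      then have off: "i \<in> off_C0" using that by (simp add: off_C0_def P_i)
      then have "q i \<in> q ` off_C0 \<union> \<Phi> \<union> {z}" by blast
      from G(3)[OF this] have G_i: "bform g (b - e) t0 t1 \<noteq> 0" by (simp add: g P_i)
      have "bform h b t0 t1 = - x0 * bform g (b - e) t0 t1 / x1"
        using H(2)[OF off] by (simp add: v_def g h P_i)
      then show ?thesis
        using False G_i by (simp add: P_i passes_through_def sec_eval_def smooth_at_if_nonvanishing)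
    qed
  qed
  moreover have "nonzero_section e b (g, h)"
    using G(3)[of z] nonzero_section_if_nonvanishing[of g b e "fst z" "snd z" h] by (simp add: g)
  moreover have "transverse_to_fibre e b (g, h) \<tau>" if "\<tau> \<in> \<Phi>" for \<tau>
    using G(3)[of \<tau>] that Phi_nonzero by (intro transverse_to_fibre_if_nonvanishing) (auto simp: g)
  ultimately show ?thesis unfolding good_section_def by blast
qed

lemma smooth_at_simple_root_off_C0:
  assumes w: "\<And>i. i < r \<Longrightarrow> det2 w (q i) \<noteq> 0" and i: "i \<in> off_C0"
    and h: "\<And>v. bform h b (fst v) (snd v) = root_form q off_C0 n w v"
  shows "smooth_at e b (\<lambda>_. 0, h) (P i)"
proof -
  obtain t0 t1 x0 x1 where P_i: "P i = (t0, t1, x0, x1)" by (cases "P i") auto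
  have ir: "i < r" and x1: "x1 \<noteq> 0" using i by (simp_all add: off_C0_def P_i)
  define R where "R = root_form q (off_C0 - {i}) n w"
  have "det2 (q j) (q i) \<noteq> 0" if "j \<in> off_C0 - {i}" for j
    using that ir distinct_fibres by (auto simp: off_C0_def)
  then have R_nonzero: "R (t0, t1) \<noteq> 0"
    unfolding R_def using w[OF ir] P_i by (intro root_form_nonzero) simp_all
  have split: "bform h b (fst v) (snd v) = det2 (t0, t1) v * R v" for v
    using root_form_remove[OF finite_off_C0 i] by (simp add: h R_def P_i)
  have R: "binary_form (card (off_C0 - {i}) + n) R"
    unfolding R_def by (simp add: binary_form_root_form)
  have "(t0, t1) \<noteq> (0, 0)" using base_nonzero[OF ir] by (simp add: P_i)
  then show ?thesis
    unfolding P_i by (rule smooth_at_simple_root[OF split R R_nonzero _ x1])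
qed

lemma good_section_if_many_on_C0:
  assumes "b - e < card on_C0"
  shows "\<exists>\<sigma>. good_section \<sigma>"
proof -
  obtain w z where w: "\<And>i. i < r \<Longrightarrow> det2 w (q i) \<noteq> 0" "\<And>\<tau>. \<tau> \<in> \<Phi> \<Longrightarrow> det2 w \<tau> \<noteq> 0"
    and z: "\<And>i. i < r \<Longrightarrow> det2 (q i) z \<noteq> 0" "det2 w z \<noteq> 0"
    using exists_generic_pair unfolding generic_pair_def by blast
  define n where "n = b - card off_C0"
  define H where "H = root_form q off_C0 n w"
  have "card off_C0 \<le> b" using assms card_on_C0_off_C0 r_le by simp
  then have "binary_form b H"
    using binary_form_root_form[of off_C0 n q w] by (simp add: H_def n_def)
  then obtain h where h: "\<And>z. H z = bform h b (fst z) (snd z)"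
    by (auto simp: binary_form_def)
  have H_nonzero: "H v \<noteq> 0" if v: "v \<in> q ` on_C0 \<union> \<Phi> \<union> {z}" for v
  proof -
    have "det2 (q i) v \<noteq> 0" if "i \<in> off_C0" for i
      using that v det2_on_off_C0(2) Phi_off[of v i] z(1)[of i] on_off_C0(2) by blast
    moreover have "det2 w v \<noteq> 0"
      using v w z(2) on_off_C0(1) by blast
    ultimately show ?thesis unfolding H_def by (intro root_form_nonzero) simp_all
  qed
  have zero_form: "bform (\<lambda>_. 0) d s0 s1 = 0" for d s0 s1
    by (simp add: bform_def)
  have "passes_through e b (\<lambda>_. 0, h) (P i) \<and> smooth_at e b (\<lambda>_. 0, h) (P i)" if ir: "i < r" for i
  proof -
    obtain t0 t1 x0 x1 where P_i: "P i = (t0, t1, x0, x1)" by (cases "P i") auto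
    show ?thesis
    proof (cases "x1 = 0")
      case True
      then have "i \<in> on_C0" using ir by (simp add: on_C0_def P_i)
      then have "q i \<in> q ` on_C0 \<union> \<Phi> \<union> {z}" by blast
      from H_nonzero[OF this] have "bform h b t0 t1 \<noteq> 0" by (simp add: h P_i)
      then show ?thesis
        using True by (simp add: P_i zero_form passes_through_def sec_eval_def smooth_at_if_nonvanishing)
    next
      case False
      then have i: "i \<in> off_C0" using ir by (simp add: off_C0_def P_i)
      then have "H (q i) = 0" unfolding H_def using root_form_eq_0[of off_C0 i q n w] by simp
      moreover have "smooth_at e b (\<lambda>_. 0, h) (P i)"
        using smooth_at_simple_root_off_C0[OF w(1) i, of h n] h by (simp add: H_def)
      ultimately show ?thesis by (simp add: P_i h zero_form passes_through_def sec_eval_def)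
    qed
  qed
  moreover have "nonzero_section e b (\<lambda>_. 0, h)"
    using H_nonzero[of z] nonzero_section_if_nonvanishing[of "\<lambda>_. 0" b e "fst z" "snd z" h]
    by (simp add: h)
  moreover have "transverse_to_fibre e b (\<lambda>_. 0, h) \<tau>" if "\<tau> \<in> \<Phi>" for \<tau>
    using H_nonzero[of \<tau>] that Phi_nonzero by (intro transverse_to_fibre_if_nonvanishing) (auto simp: h)
  ultimately show ?thesis unfolding good_section_def by blast
qed

end

theorem lemma4p1:
  fixes e b r :: nat and P :: "nat \<Rightarrow> pt" and \<Phi> :: "(complex \<times> complex) set"
  assumes va: "very_ample_Fe e 1 b"
    and pts: "\<And>i. i < r \<Longrightarrow> valid_pt (P i)"
    and fib: "\<And>i j. i < r \<Longrightarrow> j < r \<Longrightarrow> i \<noteq> j \<Longrightarrow> \<not> same_fibre (P i) (P j)"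
    and h0: "h0_C0_bf e b \<ge> 2 * r"
    and Phi_fin: "finite \<Phi>"
    and Phi_fib: "\<And>\<tau>. \<tau> \<in> \<Phi> \<Longrightarrow> \<tau> \<noteq> (0, 0)"
    and Phi_disj: "\<And>\<tau> i. \<tau> \<in> \<Phi> \<Longrightarrow> i < r \<Longrightarrow> \<not> on_fibre \<tau> (P i)"
  shows "\<exists>\<sigma>. nonzero_section e b \<sigma>
           \<and> (\<forall>i<r. passes_through e b \<sigma> (P i) \<and> smooth_at e b \<sigma> (P i))
           \<and> (\<forall>\<tau>\<in>\<Phi>. transverse_to_fibre e b \<sigma> \<tau>)"
proof -
  have "r \<le> Suc b" using h0 by (simp add: h0_C0_bf_def)
  then interpret marked_fibres e b r P \<Phi>
    using pts fib Phi_fin Phi_fib Phi_disj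
    by unfold_locales (auto simp: same_fibre_iff_det2 on_fibre_iff_det2)
  have "\<exists>\<sigma>. good_section \<sigma>"
    using good_section_if_few_on_C0 good_section_if_many_on_C0 by (cases "card on_C0 \<le> b - e") auto
  then show ?thesis unfolding good_section_def .
qed

end
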